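(* For positive integers $b,c$ with $1\le b<b+2\le c$, $$\frac{c+1}{c-b}\le\sum_{t=0}^\infty\frac{(b+t)!\,c!}{(c+t)!\,b!}\le\frac{c+1}{c-b}\bigl(1+\varepsilon(c-b)\bigr),$$ where $\varepsilon(a)=3\,\dfrac{1+\ln a}{a}+4e^{1/12}\,2^{-a/2}$. *)

theory Defs
  imports Complex_Main
begin

definition eps :: "real \<Rightarrow> real" where
  "eps a = 3 * (1 + ln a) / a + 4 * exp (1/12) * 2 powr (- a / 2)"

end

theory Submission
  imports Defs "HOL-Real_Asymp.Real_Asymp"
begin

text \<open>The series has the closed form \<open>c / (c - b - 1)\<close>: its terms satisfy
  \<open>(c - b - 1) f t = (c + t) f t - (c + t + 1) f (t + 1)\<close>, so it telescopes, and
  \<open>(c + t) f t = O(1 / t)\<close> tends to zero. Both bounds then follow from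
  \<open>(c + 1) / a \<le> c / (a - 1) \<le> (c + 1) / (a - 1)\<close> for \<open>a = c - b\<close> and from
  \<open>\<epsilon>(a) \<ge> 3 / a \<ge> 1 / (a - 1)\<close>.\<close>

definition fact_ratio :: "nat \<Rightarrow> nat \<Rightarrow> nat \<Rightarrow> real" where
  "fact_ratio b c t = fact (b + t) * fact c / (fact (c + t) * fact b)"

lemma fact_ratio_pos: "fact_ratio b c t > 0"
  by (simp add: fact_ratio_def)

lemma fact_ratio_0 [simp]: "fact_ratio b c 0 = 1"
  by (simp add: fact_ratio_def)

lemma fact_ratio_Suc:
  "(real c + real t + 1) * fact_ratio b c (Suc t) = (real b + real t + 1) * fact_ratio b c t"
proof -
  have "fact_ratio b c (Suc t) =
      (real b + real t + 1) * fact (b + t) * fact c / ((real c + real t + 1) * fact (c + t) * fact b)"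
    by (simp add: fact_ratio_def algebra_simps)
  then show ?thesis
    by (simp add: fact_ratio_def)
qed

lemma fact_ratio_telescope:
  "(real c - real b - 1) * fact_ratio b c t =
     (real c + real t) * fact_ratio b c t - (real c + real t + 1) * fact_ratio b c (Suc t)"
  unfolding fact_ratio_Suc by (simp add: algebra_simps)

lemma fact_ratio_weighted_le:
  assumes "b + 1 < c"
  shows "(real c + real t) * fact_ratio b c t \<le> fact c / (fact b * (real b + real t + 1))"
proof -
  obtain d where "c = Suc (b + 1 + d)"
    using assms less_iff_Suc_add by blast
  then have d: "c + t = Suc (Suc (b + t) + d)"
    by simp
  then have cd: "real c + real t = real (Suc (Suc (b + t) + d))"
    by (simp only: of_nat_add[symmetric])
  have "(real c + real t) * (real b + real t + 1) * fact (b + t) = (real c + real t) * fact (Suc (b + t))"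
    by (simp add: algebra_simps)
  also have "\<dots> \<le> (real c + real t) * fact (Suc (b + t) + d)"
    by (intro mult_left_mono fact_mono) auto
  also have "\<dots> = fact (c + t)"
    unfolding cd d by (rule fact_Suc[symmetric])
  finally have "(real c + real t) * (real b + real t + 1) * fact (b + t) \<le> fact (c + t)" .
  then have "(real c + real t) * fact (b + t) / fact (c + t) \<le> 1 / (real b + real t + 1)"
    by (simp add: divide_simps mult.commute mult.left_commute)
  then have "fact c / fact b * ((real c + real t) * fact (b + t) / fact (c + t))
      \<le> fact c / fact b * (1 / (real b + real t + 1))"
    by (rule mult_left_mono) simp
  then show ?thesis
    by (simp add: fact_ratio_def mult_ac)
qed

lemma fact_ratio_weighted_tendsto_0:
  assumes "b + 1 < c"
  shows "(\<lambda>t. (real c + real t) * fact_ratio b c t) \<longlonglongrightarrow> 0"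
proof (rule tendsto_sandwich[OF _ _ tendsto_const])
  show "\<forall>\<^sub>F t in sequentially. 0 \<le> (real c + real t) * fact_ratio b c t"
    using fact_ratio_pos by (simp add: less_imp_le)
  show "\<forall>\<^sub>F t in sequentially.
      (real c + real t) * fact_ratio b c t \<le> fact c / (fact b * (real b + real t + 1))"
    using fact_ratio_weighted_le[OF assms] by simp
  show "(\<lambda>t. fact c / (fact b * (real b + real t + 1))) \<longlonglongrightarrow> 0"
    by real_asymp
qed

lemma fact_ratio_sums:
  assumes "b + 1 < c"
  shows "fact_ratio b c sums (real c / (real c - real b - 1))"
proof -
  define h where "h t = (real c + real t) * fact_ratio b c t / (real c - real b - 1)" for t
  have "h \<longlonglongrightarrow> 0"
    unfolding h_def using fact_ratio_weighted_tendsto_0[OF assms] by (rule tendsto_divide_zero)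
  then have "(\<lambda>t. h t - h (Suc t)) sums (h 0 - 0)"
    by (rule telescope_sums')
  moreover have "h t - h (Suc t) = fact_ratio b c t" for t
  proof -
    have "h t - h (Suc t) = ((real c + real t) * fact_ratio b c t
        - (real c + real t + 1) * fact_ratio b c (Suc t)) / (real c - real b - 1)"
      unfolding h_def by (simp add: diff_divide_distrib add_ac)
    also have "\<dots> = fact_ratio b c t"
      unfolding fact_ratio_telescope[symmetric] using assms by simp
    finally show ?thesis .
  qed
  ultimately show ?thesis
    by (simp add: h_def)
qed

lemma eps_ge_inverse_pred:
  assumes "3 / 2 \<le> a"
  shows "1 / (a - 1) \<le> eps a"
proof -
  have "1 / (a - 1) \<le> 3 / a"
    using assms by (simp add: field_simps)
  also have "\<dots> \<le> 3 * (1 + ln a) / a"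
    using assms by (intro divide_right_mono) auto
  also have "\<dots> \<le> eps a"
    unfolding eps_def by simp
  finally show ?thesis .
qed

theorem lemma2:
  fixes b c :: nat
  assumes "1 \<le> b" and "b + 2 \<le> c"
  defines "f \<equiv> (\<lambda>t::nat. (fact (b + t) * fact c) / (fact (c + t) * fact b) :: real)"
  shows "summable f \<and>
         (real c + 1) / (real c - real b) \<le> (\<Sum>t. f t) \<and>
         (\<Sum>t. f t) \<le> (real c + 1) / (real c - real b) * (1 + eps (real c - real b))"
proof -
  define a where "a = real c - real b"
  have a: "2 \<le> a" "a \<le> real c"
    using assms(2) by (auto simp: a_def)
  have "f = fact_ratio b c"
    by (simp add: f_def fact_ratio_def fun_eq_iff)
  then have sums: "f sums (real c / (a - 1))"
    using fact_ratio_sums[of b c] assms(2) by (simp add: a_def)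
  have lower: "(real c + 1) / a \<le> real c / (a - 1)"
    using a by (simp add: field_simps)
  have "real c / (a - 1) \<le> (real c + 1) / (a - 1)"
    using a by (simp add: divide_right_mono)
  also have "\<dots> = (real c + 1) / a * (1 + 1 / (a - 1))"
    using a by (simp add: field_simps)
  also have "\<dots> \<le> (real c + 1) / a * (1 + eps a)"
    using a eps_ge_inverse_pred[of a] by (intro mult_left_mono) auto
  finally show ?thesis
    using sums lower unfolding a_def by (auto simp: sums_iff)
qed

end
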